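(* Let $(\Lambda,d)$ be a finitely aligned $k$-graph and give $X_\Lambda$ the topology generated by the subbasis $\{D_F,X_\Lambda\setminus D_F:F\in S_\Lambda\}$. Then the set $\partial\Lambda$ of boundary paths is closed in $X_\Lambda$.
   Context: A $k$-graph $(\Lambda,d)$ is a countable small category $\Lambda$ (objects identified with identity morphisms) with a functor $d:\Lambda\to\mathbb N^k$ satisfying unique factorization: whenever $d(\lambda)=m+n$ there are unique $\mu,\nu$ with $d(\mu)=m$, $d(\nu)=n$, $\lambda=\mu\nu$. $\Lambda^0=d^{-1}(0)$, $r,s$ range/source, $v\Lambda=r^{-1}(v)$. $\Lambda^{\min}(\lambda,\mu)=\{(\alpha,\beta):\lambda\alpha=\mu\beta,\ d(\lambda\alpha)=d(\lambda)\vee d(\mu)\}$; finitely aligned means all are finite. $E\subseteq v\Lambda$ is exhaustive if every $\mu\in v\Lambda$ has some $\lambda\in E$ with $\Lambda^{\min}(\lambda,\mu)\ne\emptyset$; $v\mathrm{FE}(\Lambda)$ = finite exhaustive subsets of $v\Lambda$. $S_\Lambda$ is the set of finite $F\subseteq\{(\lambda,\mu):s(\lambda)=s(\mu)\}$ such that distinct $(\lambda,\mu),(\nu,\omega)\in F$ satisfy $\Lambda^{\min}(\lambda,\nu)=\Lambda^{\min}(\mu,\omega)=\emptyset$. $\Omega_{k,m}$ ($m\in(\mathbb N\cup\{\infty\})^k$): objects $\{p\in\mathbb N^k:p\le m\}$, morphisms $(p,q)$ with $p\le q\le m$, $r(p,q)=p$, $s(p,q)=q$, $d(p,q)=q-p$.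 $X_\Lambda$ = all degree-preserving functors $x:\Omega_{k,m}\to\Lambda$; $d(x)=m$, $x(n)=x(n,n)$. $D_F=\{x:\exists(\lambda,\mu)\in F,\ d(\mu)\le d(x),\ x(0,d(\mu))=\mu\}$. $x\in X_\Lambda$ is a boundary path if for all $n\in\mathbb N^k$ with $n\le d(x)$ and all $E\in x(n)\mathrm{FE}(\Lambda)$ there is $\lambda\in E$ with $x(n,n+d(\lambda))=\lambda$; $\partial\Lambda$ is the set of boundary paths. *)

theory Defs
  imports "HOL-Analysis.Analysis" "HOL-Library.Extended_Nat"
begin

text \<open>A k-graph, with k the cardinality of the finite index type 'k.
  Degrees live in 'k \<Rightarrow> nat (the monoid N^k, pointwise order, pointwise sup = join).
  Objects are identified with identity morphisms.\<close>

record ('a, 'k) kgraph =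
  Mor :: "'a set"
  rng :: "'a \<Rightarrow> 'a"
  src :: "'a \<Rightarrow> 'a"
  cmp :: "'a \<Rightarrow> 'a \<Rightarrow> 'a"
  deg :: "'a \<Rightarrow> ('k \<Rightarrow> nat)"

definition is_kgraph :: "('a, 'k::finite) kgraph \<Rightarrow> bool" where
  "is_kgraph L \<longleftrightarrow>
     countable (Mor L)
   \<comment> \<open>small category\<close>
   \<and> (\<forall>l\<in>Mor L. rng L l \<in> Mor L \<and> src L l \<in> Mor L)
   \<and> (\<forall>l\<in>Mor L. rng L (rng L l) = rng L l \<and> src L (rng L l) = rng L l
                 \<and> rng L (src L l) = src L l \<and> src L (src L l) = src L l)
   \<and> (\<forall>l\<in>Mor L. \<forall>m\<in>Mor L. src L l = rng L m \<longrightarrow>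
          cmp L l m \<in> Mor L \<and> rng L (cmp L l m) = rng L l \<and> src L (cmp L l m) = src L m)
   \<and> (\<forall>l\<in>Mor L. cmp L (rng L l) l = l \<and> cmp L l (src L l) = l)
   \<and> (\<forall>l\<in>Mor L. \<forall>m\<in>Mor L. \<forall>n\<in>Mor L. src L l = rng L m \<longrightarrow> src L m = rng L n \<longrightarrow>
          cmp L (cmp L l m) n = cmp L l (cmp L m n))
   \<comment> \<open>d is a functor to N^k\<close>
   \<and> (\<forall>l\<in>Mor L. deg L (rng L l) = (\<lambda>_. 0))
   \<and> (\<forall>l\<in>Mor L. \<forall>m\<in>Mor L. src L l = rng L m \<longrightarrow>
          deg L (cmp L l m) = (\<lambda>i. deg L l i + deg L m i))
   \<comment> \<open>unique factorisation\<close>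
   \<and> (\<forall>l\<in>Mor L. \<forall>p q. deg L l = (\<lambda>i. p i + q i) \<longrightarrow>
          (\<exists>!(m, n). m \<in> Mor L \<and> n \<in> Mor L \<and> src L m = rng L n
                   \<and> deg L m = p \<and> deg L n = q \<and> l = cmp L m n))"

definition Lmin :: "('a, 'k::finite) kgraph \<Rightarrow> 'a \<Rightarrow> 'a \<Rightarrow> ('a \<times> 'a) set" where
  "Lmin L l m = {(a, b). a \<in> Mor L \<and> b \<in> Mor L \<and> src L l = rng L a \<and> src L m = rng L b
      \<and> cmp L l a = cmp L m b \<and> deg L (cmp L l a) = sup (deg L l) (deg L m)}"

definition finitely_aligned :: "('a, 'k::finite) kgraph \<Rightarrow> bool" where
  "finitely_aligned L \<longleftrightarrow> (\<forall>l\<in>Mor L. \<forall>m\<in>Mor L. finite (Lmin L l m))"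

definition vL :: "('a, 'k::finite) kgraph \<Rightarrow> 'a \<Rightarrow> 'a set" where
  "vL L v = {l \<in> Mor L. rng L l = v}"

definition exhaustive :: "('a, 'k::finite) kgraph \<Rightarrow> 'a \<Rightarrow> 'a set \<Rightarrow> bool" where
  "exhaustive L v E \<longleftrightarrow> E \<subseteq> vL L v \<and> (\<forall>m\<in>vL L v. \<exists>l\<in>E. Lmin L l m \<noteq> {})"

definition FE :: "('a, 'k::finite) kgraph \<Rightarrow> 'a \<Rightarrow> 'a set set" where
  "FE L v = {E. finite E \<and> exhaustive L v E}"

definition S_L :: "('a, 'k::finite) kgraph \<Rightarrow> ('a \<times> 'a) set set" where
  "S_L L = {F. finite F \<and> F \<subseteq> {(l, m). l \<in> Mor L \<and> m \<in> Mor L \<and> src L l = src L m}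
     \<and> (\<forall>(l, m)\<in>F. \<forall>(n, w)\<in>F. (l, m) \<noteq> (n, w) \<longrightarrow> Lmin L l n = {} \<and> Lmin L m w = {})}"

text \<open>Paths: a pair (m, x) with m \<in> (N \<union> {\<infinity>})^k and x the (extensional) morphism map of a
  degree-preserving functor \<Omega>_{k,m} \<rightarrow> \<Lambda>; the morphism (p,q) of \<Omega>_{k,m} is sent to x p q.\<close>

definition le_en :: "('k \<Rightarrow> nat) \<Rightarrow> ('k \<Rightarrow> enat) \<Rightarrow> bool" where
  "le_en q m \<longleftrightarrow> (\<forall>i. enat (q i) \<le> m i)"

definition in_Omega :: "('k \<Rightarrow> enat) \<Rightarrow> ('k \<Rightarrow> nat) \<Rightarrow> ('k \<Rightarrow> nat) \<Rightarrow> bool" where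
  "in_Omega m p q \<longleftrightarrow> p \<le> q \<and> le_en q m"

type_synonym ('a, 'k) path = "('k \<Rightarrow> enat) \<times> (('k \<Rightarrow> nat) \<Rightarrow> ('k \<Rightarrow> nat) \<Rightarrow> 'a)"

definition is_path :: "('a, 'k::finite) kgraph \<Rightarrow> ('a, 'k) path \<Rightarrow> bool" where
  "is_path L x \<longleftrightarrow> (case x of (m, f) \<Rightarrow>
      (\<forall>p q. in_Omega m p q \<longrightarrow> f p q \<in> Mor L \<and> deg L (f p q) = (\<lambda>i. q i - p i)
                                 \<and> rng L (f p q) = f p p \<and> src L (f p q) = f q q)
    \<and> (\<forall>p q t. in_Omega m p q \<longrightarrow> in_Omega m q t \<longrightarrow> f p t = cmp L (f p q) (f q t))
    \<and> (\<forall>p q. \<not> in_Omega m p q \<longrightarrow> f p q = undefined))"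

definition X_L :: "('a, 'k::finite) kgraph \<Rightarrow> ('a, 'k) path set" where
  "X_L L = {x. is_path L x}"

definition D_F :: "('a, 'k::finite) kgraph \<Rightarrow> ('a \<times> 'a) set \<Rightarrow> ('a, 'k) path set" where
  "D_F L F = {x \<in> X_L L. \<exists>(l, m)\<in>F. le_en (deg L m) (fst x) \<and> snd x (\<lambda>_. 0) (deg L m) = m}"

definition boundary_paths :: "('a, 'k::finite) kgraph \<Rightarrow> ('a, 'k) path set" where
  "boundary_paths L = {x \<in> X_L L.
     \<forall>n. le_en n (fst x) \<longrightarrow> (\<forall>E\<in>FE L (snd x n n).
        \<exists>l\<in>E. le_en (\<lambda>i. n i + deg L l i) (fst x) \<and> snd x n (\<lambda>i. n i + deg L l i) = l)}"

definition path_topology :: "('a, 'k::finite) kgraph \<Rightarrow> ('a, 'k) path topology" where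
  "path_topology L = topology_generated_by
     ((\<lambda>F. D_F L F) ` S_L L \<union> (\<lambda>F. X_L L - D_F L F) ` S_L L)"

end

theory Submission
  imports Defs
begin

text \<open>A path x that is not a boundary path comes with some n \<le> d(x) and a finite exhaustive
  E \<subseteq> x(n)\<Lambda> such that x(n, n + d(\<lambda>)) \<noteq> \<lambda> for every \<lambda> \<in> E. With \<mu> = x(0, n), the paths that
  begin with \<mu> but with none of the \<mu>\<lambda>, \<lambda> \<in> E, form a finite intersection of subbasic sets, hence
  an open neighbourhood of x. By unique factorisation a path beginning with \<mu> begins with \<mu>\<lambda>
  exactly when it continues with \<lambda> at n, so this neighbourhood contains no boundary path.\<close>

definition has_segment :: "('a, 'k::finite) kgraph \<Rightarrow> ('a, 'k) path \<Rightarrow> ('k \<Rightarrow> nat) \<Rightarrow> 'a \<Rightarrow> bool" where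
  "has_segment L x n l \<longleftrightarrow>
     le_en (\<lambda>i. n i + deg L l i) (fst x) \<and> snd x n (\<lambda>i. n i + deg L l i) = l"

lemma boundary_paths_has_segment:
  "boundary_paths L =
     {x \<in> X_L L. \<forall>n. le_en n (fst x) \<longrightarrow> (\<forall>E\<in>FE L (snd x n n). \<exists>l\<in>E. has_segment L x n l)}"
  unfolding boundary_paths_def has_segment_def ..

lemma kgraph_cmp:
  assumes L: "is_kgraph L" and "a \<in> Mor L" "b \<in> Mor L" "src L a = rng L b"
  shows "cmp L a b \<in> Mor L" "deg L (cmp L a b) = (\<lambda>i. deg L a i + deg L b i)"
proof -
  have "\<forall>l\<in>Mor L. \<forall>m\<in>Mor L. src L l = rng L m \<longrightarrow>
          cmp L l m \<in> Mor L \<and> rng L (cmp L l m) = rng L l \<and> src L (cmp L l m) = src L m"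
    using L unfolding is_kgraph_def by (elim conjE) assumption
  then show "cmp L a b \<in> Mor L" using assms(2-4) by blast
  have "\<forall>l\<in>Mor L. \<forall>m\<in>Mor L. src L l = rng L m \<longrightarrow>
          deg L (cmp L l m) = (\<lambda>i. deg L l i + deg L m i)"
    using L unfolding is_kgraph_def by (elim conjE) assumption
  then show "deg L (cmp L a b) = (\<lambda>i. deg L a i + deg L b i)" using assms(2-4) by blast
qed

lemma kgraph_unique_factorisation:
  assumes "is_kgraph L" "l \<in> Mor L" "deg L l = (\<lambda>i. p i + q i)"
  shows "\<exists>!(m, n). m \<in> Mor L \<and> n \<in> Mor L \<and> src L m = rng L n
           \<and> deg L m = p \<and> deg L n = q \<and> l = cmp L m n"
proof -
  have "\<forall>l\<in>Mor L. \<forall>p q. deg L l = (\<lambda>i. p i + q i) \<longrightarrow>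
          (\<exists>!(m, n). m \<in> Mor L \<and> n \<in> Mor L \<and> src L m = rng L n
                   \<and> deg L m = p \<and> deg L n = q \<and> l = cmp L m n)"
    using assms(1) unfolding is_kgraph_def by (elim conjE) assumption
  then show ?thesis using assms(2,3) by blast
qed

lemma kgraph_cmp_left_cancel:
  assumes L: "is_kgraph L"
    and mor: "a \<in> Mor L" "b \<in> Mor L" "c \<in> Mor L"
    and comp: "src L a = rng L b" "src L a = rng L c"
    and eq: "cmp L a b = cmp L a c"
  shows "b = c"
proof -
  have "deg L (cmp L a b) = deg L (cmp L a c)" using eq by simp
  then have deg_eq: "deg L c = deg L b"
    using kgraph_cmp(2)[OF L mor(1,2) comp(1)] kgraph_cmp(2)[OF L mor(1,3) comp(2)]
    by (simp add: fun_eq_iff)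
  have "\<exists>!(m, n). m \<in> Mor L \<and> n \<in> Mor L \<and> src L m = rng L n
      \<and> deg L m = deg L a \<and> deg L n = deg L b \<and> cmp L a b = cmp L m n"
    using kgraph_unique_factorisation[OF L kgraph_cmp[OF L mor(1,2) comp(1)]] .
  then have "(a, b) = (a, c)"
    by (rule ex1E) (use mor comp eq deg_eq in auto)
  then show ?thesis by simp
qed

lemma in_Omega_zero: "le_en n m \<Longrightarrow> in_Omega m (\<lambda>_. 0) n"
  unfolding in_Omega_def by (auto simp: le_fun_def)

lemma in_Omega_shift: "le_en (\<lambda>i. n i + d i) m \<Longrightarrow> in_Omega m n (\<lambda>i. n i + d i)"
  unfolding in_Omega_def by (auto simp: le_fun_def)

lemma path_segment:
  assumes "is_path L (m, f)" "in_Omega m p q"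
  shows "f p q \<in> Mor L" "deg L (f p q) = (\<lambda>i. q i - p i)"
    and "rng L (f p q) = f p p" "src L (f p q) = f q q"
  using assms unfolding is_path_def by auto

lemma path_cmp:
  assumes "is_path L (m, f)" "in_Omega m p q" "in_Omega m q t"
  shows "f p t = cmp L (f p q) (f q t)"
  using assms unfolding is_path_def by auto

lemma mem_D_F_singleton:
  "x \<in> D_F L {(a, a)} \<longleftrightarrow> x \<in> X_L L \<and> le_en (deg L a) (fst x) \<and> snd x (\<lambda>_. 0) (deg L a) = a"
  unfolding D_F_def by auto

lemma path_initial_segment:
  assumes "is_path L (m, f)" "le_en n m"
  shows "f (\<lambda>_. 0) n \<in> Mor L" "deg L (f (\<lambda>_. 0) n) = n" "src L (f (\<lambda>_. 0) n) = f n n"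
  using path_segment[OF assms(1) in_Omega_zero[OF assms(2)]] by auto

lemma path_in_D_F_initial_segment:
  assumes "is_path L (m, f)" "le_en n m"
  shows "(m, f) \<in> D_F L {(f (\<lambda>_. 0) n, f (\<lambda>_. 0) n)}"
  using assms path_initial_segment[OF assms] by (simp add: mem_D_F_singleton X_L_def)

lemma D_F_singleton_src:
  assumes "(m, f) \<in> D_F L {(a, a)}"
  shows "le_en (deg L a) m" "f (deg L a) (deg L a) = src L a"
  using assms path_initial_segment(3)[of L m f "deg L a"]
  by (auto simp: mem_D_F_singleton X_L_def)

lemma D_F_cmp_iff_has_segment:
  assumes L: "is_kgraph L"
    and x_mu: "(m, f) \<in> D_F L {(mu, mu)}"
    and l: "l \<in> vL L (src L mu)"
  shows "(m, f) \<in> D_F L {(cmp L mu l, cmp L mu l)} \<longleftrightarrow> has_segment L (m, f) (deg L mu) l"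
proof -
  let ?n = "deg L mu" and ?k = "\<lambda>i. deg L mu i + deg L l i"
  have path: "is_path L (m, f)" and n_le: "le_en ?n m" and f_mu: "f (\<lambda>_. 0) ?n = mu"
    using x_mu by (auto simp: mem_D_F_singleton X_L_def)
  have mu: "mu \<in> Mor L" using path_initial_segment(1)[OF path n_le] f_mu by simp
  have l_mor: "l \<in> Mor L" and l_rng: "src L mu = rng L l" using l unfolding vL_def by auto
  have deg_cmp: "deg L (cmp L mu l) = ?k" using kgraph_cmp(2)[OF L mu l_mor l_rng] .
  have factor: "f (\<lambda>_. 0) ?k = cmp L mu (f ?n ?k)" if "le_en ?k m"
    using path_cmp[OF path in_Omega_zero[OF n_le] in_Omega_shift[OF that]] f_mu by simp
  show ?thesis
  proof
    assume "(m, f) \<in> D_F L {(cmp L mu l, cmp L mu l)}"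
    then have k_le: "le_en ?k m" and "f (\<lambda>_. 0) ?k = cmp L mu l"
      by (auto simp: mem_D_F_singleton deg_cmp)
    then have "cmp L mu (f ?n ?k) = cmp L mu l" using factor by simp
    moreover have "f ?n ?k \<in> Mor L" "rng L (f ?n ?k) = src L mu"
      using path_segment[OF path in_Omega_shift[OF k_le]] D_F_singleton_src[OF x_mu] by auto
    ultimately have "f ?n ?k = l"
      using kgraph_cmp_left_cancel[OF L mu _ l_mor] l_rng by metis
    then show "has_segment L (m, f) ?n l" using k_le by (simp add: has_segment_def)
  next
    assume "has_segment L (m, f) ?n l"
    then show "(m, f) \<in> D_F L {(cmp L mu l, cmp L mu l)}"
      using path factor by (auto simp: has_segment_def mem_D_F_singleton deg_cmp X_L_def)
  qed
qed

definition cylinder_avoiding :: "('a, 'k::finite) kgraph \<Rightarrow> 'a \<Rightarrow> 'a set \<Rightarrow> ('a, 'k) path set" where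
  "cylinder_avoiding L mu E =
     D_F L {(mu, mu)} \<inter> (\<Inter>l\<in>E. X_L L - D_F L {(cmp L mu l, cmp L mu l)})"

lemma cylinder_avoiding_eq:
  assumes "is_kgraph L" "E \<subseteq> vL L (src L mu)"
  shows "cylinder_avoiding L mu E =
           {x \<in> D_F L {(mu, mu)}. \<forall>l\<in>E. \<not> has_segment L x (deg L mu) l}"
  using D_F_cmp_iff_has_segment[OF assms(1)] assms(2)
  unfolding cylinder_avoiding_def by (fastforce simp: mem_D_F_singleton)

lemma cylinder_avoiding_disjoint_boundary_paths:
  assumes "is_kgraph L" "E \<in> FE L (src L mu)"
  shows "cylinder_avoiding L mu E \<inter> boundary_paths L = {}"
proof -
  have "E \<subseteq> vL L (src L mu)" using assms(2) unfolding FE_def exhaustive_def by simp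
  moreover have "\<exists>l\<in>E. has_segment L (m, f) (deg L mu) l"
    if "(m, f) \<in> D_F L {(mu, mu)}" "(m, f) \<in> boundary_paths L" for m f
    using that assms(2) D_F_singleton_src[OF that(1)]
    unfolding boundary_paths_has_segment by auto
  ultimately show ?thesis
    using cylinder_avoiding_eq[OF assms(1)] by fastforce
qed

lemma topspace_path_topology: "topspace (path_topology L) = X_L L"
proof -
  have "D_F L F \<subseteq> X_L L" for F unfolding D_F_def by auto
  moreover have "{} \<in> S_L L" "D_F L {} = {}" unfolding S_L_def D_F_def by auto
  ultimately show ?thesis unfolding path_topology_def by force
qed

lemma openin_path_topology_D_F_singleton:
  assumes "a \<in> Mor L"
  shows "openin (path_topology L) (D_F L {(a, a)})"
    and "openin (path_topology L) (X_L L - D_F L {(a, a)})"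
proof -
  have "{(a, a)} \<in> S_L L" using assms unfolding S_L_def by auto
  then show "openin (path_topology L) (D_F L {(a, a)})"
    and "openin (path_topology L) (X_L L - D_F L {(a, a)})"
    unfolding path_topology_def by (auto intro: topology_generated_by_Basis)
qed

lemma openin_cylinder_avoiding:
  assumes L: "is_kgraph L" and mu: "mu \<in> Mor L"
    and E: "finite E" "E \<subseteq> vL L (src L mu)"
  shows "openin (path_topology L) (cylinder_avoiding L mu E)"
proof -
  have "openin (path_topology L) (X_L L - D_F L {(cmp L mu l, cmp L mu l)})" if "l \<in> E" for l
  proof -
    have "l \<in> Mor L" "src L mu = rng L l" using that E(2) unfolding vL_def by auto
    then show ?thesis by (intro openin_path_topology_D_F_singleton(2) kgraph_cmp(1)[OF L mu])
  qed
  then have "openin (path_topology L)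
      ((\<Inter>l\<in>E. X_L L - D_F L {(cmp L mu l, cmp L mu l)}) \<inter> topspace (path_topology L))"
    by (rule openin_INT[OF E(1)])
  with openin_path_topology_D_F_singleton(1)[OF mu]
  have "openin (path_topology L) (D_F L {(mu, mu)} \<inter>
      ((\<Inter>l\<in>E. X_L L - D_F L {(cmp L mu l, cmp L mu l)}) \<inter> topspace (path_topology L)))"
    by (rule openin_Int)
  moreover have "D_F L {(mu, mu)} \<subseteq> topspace (path_topology L)"
    unfolding topspace_path_topology D_F_def by auto
  then have "D_F L {(mu, mu)} \<inter>
      ((\<Inter>l\<in>E. X_L L - D_F L {(cmp L mu l, cmp L mu l)}) \<inter> topspace (path_topology L))
      = cylinder_avoiding L mu E"
    unfolding cylinder_avoiding_def by blast
  ultimately show ?thesis by simp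
qed

theorem lemma5p12:
  fixes L :: "('a, 'k::finite) kgraph"
  assumes "is_kgraph L" and "finitely_aligned L"
  shows "closedin (path_topology L) (boundary_paths L)"
proof -
  have "\<exists>T. openin (path_topology L) T \<and> x \<in> T \<and> T \<subseteq> X_L L - boundary_paths L"
    if x: "x \<in> X_L L - boundary_paths L" for x
  proof -
    obtain m f where x_eq: "x = (m, f)" by (cases x)
    have path: "is_path L (m, f)" using x x_eq unfolding X_L_def by simp
    obtain n E where n: "le_en n m" and E: "E \<in> FE L (f n n)"
      and avoids: "\<forall>l\<in>E. \<not> has_segment L (m, f) n l"
      using x x_eq unfolding boundary_paths_has_segment by auto
    define mu where "mu = f (\<lambda>_. 0) n"
    note mu = path_initial_segment[OF path n, folded mu_def]
    have E_mu: "E \<in> FE L (src L mu)" using E mu(3) by simp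
    then have E_sub: "finite E" "E \<subseteq> vL L (src L mu)"
      unfolding FE_def exhaustive_def by auto
    have "x \<in> cylinder_avoiding L mu E"
      using cylinder_avoiding_eq[OF assms(1) E_sub(2)] path_in_D_F_initial_segment[OF path n]
        avoids mu(2) x_eq mu_def by simp
    moreover have "cylinder_avoiding L mu E \<subseteq> X_L L - boundary_paths L"
      using cylinder_avoiding_disjoint_boundary_paths[OF assms(1) E_mu]
      unfolding cylinder_avoiding_def D_F_def by blast
    ultimately show ?thesis
      using openin_cylinder_avoiding[OF assms(1) mu(1) E_sub] by blast
  qed
  then have "openin (path_topology L) (X_L L - boundary_paths L)"
    by (subst openin_subopen) blast
  moreover have "boundary_paths L \<subseteq> X_L L" unfolding boundary_paths_def by blast
  ultimately show ?thesis
    unfolding closedin_def topspace_path_topology by blast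
qed

end
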